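(* Let $K\geqslant1$ and $f\in\mathrm{HQR}_K(\mathbb{U},\mathbb{S})$ with $f(0)=0$. Then $$|f(z)|\leqslant\frac{4}{\pi}K\operatorname{artanh}|z|\quad\text{for all } z\in\mathbb{U},$$ and this inequality is sharp for each point $z\in\mathbb{U}$ (for every $z\in\mathbb{U}$ there is $g\in\mathrm{HQR}_K(\mathbb{U},\mathbb{S})$ with $g(0)=0$ and $|g(z)|=\frac{4}{\pi}K\operatorname{artanh}|z|$).
   Context: $\mathbb{U}=\{z\in\mathbb{C}:|z|<1\}$, $\mathbb{S}=\{z\in\mathbb{C}:-1<\operatorname{Re} z<1\}$. For domains $D,G\subset\mathbb{C}$, $\mathrm{HQR}_K(D,G)$ denotes the class of complex-valued harmonic $C^1$ maps $f:D\to G$ that are sense-preserving $K$-quasiregular, i.e. $|f_z(z)|>|f_{\bar z}(z)|$ and $\frac{|f_z(z)|+|f_{\bar z}(z)|}{|f_z(z)|-|f_{\bar z}(z)|}\leqslant K$ for all $z\in D$. *)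

theory Defs
  imports "HOL-Analysis.Analysis"
begin

definition dx :: "(complex \<Rightarrow> complex) \<Rightarrow> complex \<Rightarrow> complex" where
  "dx f z = frechet_derivative f (at z) 1"

definition dy :: "(complex \<Rightarrow> complex) \<Rightarrow> complex \<Rightarrow> complex" where
  "dy f z = frechet_derivative f (at z) \<i>"

definition dz :: "(complex \<Rightarrow> complex) \<Rightarrow> complex \<Rightarrow> complex" where
  "dz f z = (dx f z - \<i> * dy f z) / 2"

definition dzbar :: "(complex \<Rightarrow> complex) \<Rightarrow> complex \<Rightarrow> complex" where
  "dzbar f z = (dx f z + \<i> * dy f z) / 2"

definition harmonic_on :: "complex set \<Rightarrow> (complex \<Rightarrow> complex) \<Rightarrow> bool" where
  "harmonic_on D f \<longleftrightarrow>
     open D \<and>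
     (\<forall>z\<in>D. f differentiable (at z)) \<and>
     (\<forall>z\<in>D. dx f differentiable (at z) \<and> dy f differentiable (at z)) \<and>
     continuous_on D (dx (dx f)) \<and> continuous_on D (dy (dx f)) \<and>
     continuous_on D (dx (dy f)) \<and> continuous_on D (dy (dy f)) \<and>
     (\<forall>z\<in>D. dx (dx f) z + dy (dy f) z = 0)"

text \<open>HQR_K(D,G): harmonic C^1 maps D -> G that are sense-preserving
  K-quasiregular.\<close>
definition HQR :: "real \<Rightarrow> complex set \<Rightarrow> complex set \<Rightarrow> (complex \<Rightarrow> complex) set" where
  "HQR K D G = {f. harmonic_on D f \<and>
      continuous_on D (dx f) \<and> continuous_on D (dy f) \<and>
      f ` D \<subseteq> G \<and>
      (\<forall>z\<in>D. norm (dz f z) > norm (dzbar f z) \<and>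
         (norm (dz f z) + norm (dzbar f z)) / (norm (dz f z) - norm (dzbar f z)) \<le> K)}"

definition unit_disc :: "complex set" where
  "unit_disc = ball 0 1"

definition strip_S :: "complex set" where
  "strip_S = {z. -1 < Re z \<and> Re z < 1}"

end

theory Submission
  imports Defs "HOL-Complex_Analysis.Riemann_Mapping"
begin

text \<open>Since \<open>Re f\<close> is harmonic on the disc, it is the real part of a holomorphic \<open>F\<close> with
  \<open>F' = dz f + cnj (dzbar f)\<close>, and \<open>F\<close> maps the disc into the strip. Transported to the strip,
  the Schwarz-Pick lemma gives \<open>\<bar>F' z\<bar> (1 - \<bar>z\<bar>\<^sup>2) \<le> 4/\<pi>\<close>. Quasiregularity bounds the
  differential of \<open>f\<close> by \<open>K (\<bar>dz f\<bar> - \<bar>dzbar f\<bar>) \<le> K \<bar>F'\<bar>\<close>, hence by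
  \<open>(4K/\<pi>) / (1 - \<bar>z\<bar>\<^sup>2)\<close>; integrating along the radius through \<open>z\<close>, parametrised so that
  this weight becomes constant, yields \<open>\<bar>f z\<bar> \<le> (4K/\<pi>) artanh \<bar>z\<bar>\<close>. Equality at \<open>z\<close>
  holds for the stretch \<open>x + i y \<mapsto> x + i K y\<close> composed with a conformal map of the disc onto
  the strip that sends \<open>z\<close> to the imaginary axis.\<close>

section \<open>Symmetry of mixed partial derivatives\<close>

lemma has_real_derivative_along_line:
  fixes \<phi> :: "complex \<Rightarrow> real"
  assumes "(\<phi> has_derivative L) (at (w + of_real s * v))"
  shows "((\<lambda>t. \<phi> (w + of_real t * v)) has_real_derivative L v) (at s)"
proof -
  have "((\<lambda>t. w + of_real t * v) has_derivative (\<lambda>t. of_real t * v)) (at s)"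
    by (auto intro!: derivative_eq_intros)
  from diff_chain_at[OF this assms]
  have "((\<lambda>t. \<phi> (w + of_real t * v)) has_derivative (\<lambda>t. L (t *\<^sub>R v))) (at s)"
    by (simp add: o_def scaleR_conv_of_real)
  moreover have "(\<lambda>t. L (t *\<^sub>R v)) = (\<lambda>t. L v * t)"
    using linear_scale[OF has_derivative_linear[OF assms]] by (simp add: mult.commute)
  ultimately show ?thesis
    by (simp add: has_field_derivative_def)
qed

lemma second_difference_mean_value:
  fixes \<phi> :: "complex \<Rightarrow> real"
  assumes h: "0 < h"
    and sub: "\<And>a b. 0 \<le> a \<Longrightarrow> a \<le> h \<Longrightarrow> 0 \<le> b \<Longrightarrow> b \<le> h \<Longrightarrow> z0 + of_real a * u + of_real b * v \<in> D"
    and d\<phi>: "\<And>z. z \<in> D \<Longrightarrow> (\<phi> has_derivative \<Phi> z) (at z)"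
    and dA: "\<And>z. z \<in> D \<Longrightarrow> ((\<lambda>w. \<Phi> w u) has_derivative A z) (at z)"
  shows "\<exists>a b. 0 < a \<and> a < h \<and> 0 < b \<and> b < h \<and>
    \<phi> (z0 + of_real h * u + of_real h * v) - \<phi> (z0 + of_real h * u) - \<phi> (z0 + of_real h * v) + \<phi> z0
      = h * h * A (z0 + of_real a * u + of_real b * v) v"
proof -
  define g where "g s = \<phi> ((z0 + of_real h * v) + of_real s * u) - \<phi> (z0 + of_real s * u)" for s
  have dg: "DERIV g s :> \<Phi> (z0 + of_real h * v + of_real s * u) u - \<Phi> (z0 + of_real s * u) u"
    if "0 \<le> s" "s \<le> h" for s
  proof -
    have "z0 + of_real h * v + of_real s * u \<in> D" "z0 + of_real s * u \<in> D"
      using sub[of s h] sub[of s 0] that h by (simp_all add: add_ac)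
    then show ?thesis unfolding g_def
      by (intro DERIV_diff has_real_derivative_along_line d\<phi>)
  qed
  then obtain a where a: "0 < a" "a < h"
    and ga: "g h - g 0 = h * (\<Phi> (z0 + of_real h * v + of_real a * u) u - \<Phi> (z0 + of_real a * u) u)"
    using MVT2[OF h dg] by auto
  define q where "q t = \<Phi> ((z0 + of_real a * u) + of_real t * v) u" for t
  have dq: "DERIV q t :> A (z0 + of_real a * u + of_real t * v) v" if "0 \<le> t" "t \<le> h" for t
    unfolding q_def using sub[of a t] that a by (intro has_real_derivative_along_line dA) simp
  then obtain b where b: "0 < b" "b < h" and qb: "q h - q 0 = h * A (z0 + of_real a * u + of_real b * v) v"
    using MVT2[OF h dq] by auto
  have "\<phi> (z0 + of_real h * u + of_real h * v) - \<phi> (z0 + of_real h * u) - \<phi> (z0 + of_real h * v) + \<phi> z0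
      = g h - g 0"
    unfolding g_def by (simp add: add_ac)
  also have "\<dots> = h * (q h - q 0)"
    unfolding ga q_def by (simp add: add_ac)
  finally show ?thesis
    using a b qb by auto
qed

text \<open>The second difference of \<open>\<phi>\<close> over a small square is \<open>h\<^sup>2\<close> times either mixed partial,
  evaluated at some point of the square.\<close>
lemma mixed_partials_meet_near:
  fixes \<phi> :: "complex \<Rightarrow> real"
  assumes "r > 0" and r: "ball z0 r \<subseteq> D"
    and d\<phi>: "\<And>z. z \<in> D \<Longrightarrow> (\<phi> has_derivative \<Phi> z) (at z)"
    and dA: "\<And>z. z \<in> D \<Longrightarrow> ((\<lambda>w. \<Phi> w 1) has_derivative A z) (at z)"
    and dB: "\<And>z. z \<in> D \<Longrightarrow> ((\<lambda>w. \<Phi> w \<i>) has_derivative B z) (at z)"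
  shows "\<exists>p q. dist p z0 < r \<and> dist q z0 < r \<and> A p \<i> = B q 1"
proof -
  define h where "h = r / 3"
  have "h > 0" using \<open>r > 0\<close> unfolding h_def by simp
  have close: "dist (z0 + of_real a * u + of_real b * v) z0 < r"
    if "norm u = 1" "norm v = 1" "0 \<le> a" "a \<le> h" "0 \<le> b" "b \<le> h" for u v a b
  proof -
    have "norm (of_real a * u + of_real b * v) \<le> a + b"
      using norm_triangle_ineq[of "of_real a * u" "of_real b * v"] that by (simp add: norm_mult)
    then show ?thesis using that \<open>r > 0\<close> unfolding h_def by (simp add: dist_norm add.assoc)
  qed
  have sub: "z0 + of_real a * u + of_real b * v \<in> D"
    if "norm u = 1" "norm v = 1" "0 \<le> a" "a \<le> h" "0 \<le> b" "b \<le> h" for u v a b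
    using close[OF that] r by (auto simp: dist_commute)
  obtain a b where ab: "0 < a" "a < h" "0 < b" "b < h"
    and ab_eq: "\<phi> (z0 + of_real h * 1 + of_real h * \<i>) - \<phi> (z0 + of_real h * 1) - \<phi> (z0 + of_real h * \<i>) + \<phi> z0
      = h * h * A (z0 + of_real a * 1 + of_real b * \<i>) \<i>"
    using second_difference_mean_value[OF \<open>h > 0\<close> sub[OF norm_one norm_ii] d\<phi> dA] by blast
  obtain c d where cd: "0 < c" "c < h" "0 < d" "d < h"
    and cd_eq: "\<phi> (z0 + of_real h * \<i> + of_real h * 1) - \<phi> (z0 + of_real h * \<i>) - \<phi> (z0 + of_real h * 1) + \<phi> z0
      = h * h * B (z0 + of_real c * \<i> + of_real d * 1) 1"
    using second_difference_mean_value[OF \<open>h > 0\<close> sub[OF norm_ii norm_one] d\<phi> dB] by blast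
  have "\<phi> (z0 + of_real h * \<i> + of_real h * 1) = \<phi> (z0 + of_real h * 1 + of_real h * \<i>)"
    by (simp add: add_ac)
  then have "h * h * A (z0 + of_real a * 1 + of_real b * \<i>) \<i> = h * h * B (z0 + of_real c * \<i> + of_real d * 1) 1"
    using ab_eq cd_eq by linarith
  then have "A (z0 + of_real a * 1 + of_real b * \<i>) \<i> = B (z0 + of_real c * \<i> + of_real d * 1) 1"
    using \<open>h > 0\<close> by simp
  then show ?thesis
    using close[OF norm_one norm_ii, of a b] close[OF norm_ii norm_one, of c d] ab cd by fastforce
qed

lemma mixed_partials_eq:
  fixes \<phi> :: "complex \<Rightarrow> real"
  assumes "open D" "z0 \<in> D"
    and d\<phi>: "\<And>z. z \<in> D \<Longrightarrow> (\<phi> has_derivative \<Phi> z) (at z)"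
    and dA: "\<And>z. z \<in> D \<Longrightarrow> ((\<lambda>w. \<Phi> w 1) has_derivative A z) (at z)"
    and dB: "\<And>z. z \<in> D \<Longrightarrow> ((\<lambda>w. \<Phi> w \<i>) has_derivative B z) (at z)"
    and cA: "continuous (at z0) (\<lambda>w. A w \<i>)"
    and cB: "continuous (at z0) (\<lambda>w. B w 1)"
  shows "A z0 \<i> = B z0 1"
proof (rule ccontr)
  assume "A z0 \<i> \<noteq> B z0 1"
  define e where "e = \<bar>A z0 \<i> - B z0 1\<bar> / 2"
  have "e > 0" using \<open>A z0 \<i> \<noteq> B z0 1\<close> unfolding e_def by simp
  obtain d1 where "d1 > 0" and d1: "\<And>w. dist w z0 < d1 \<Longrightarrow> dist (A w \<i>) (A z0 \<i>) < e"
    using cA \<open>e > 0\<close> unfolding continuous_at_eps_delta by blast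
  obtain d2 where "d2 > 0" and d2: "\<And>w. dist w z0 < d2 \<Longrightarrow> dist (B w 1) (B z0 1) < e"
    using cB \<open>e > 0\<close> unfolding continuous_at_eps_delta by blast
  obtain d3 where "d3 > 0" and d3: "ball z0 d3 \<subseteq> D"
    using \<open>open D\<close> \<open>z0 \<in> D\<close> openE by blast
  define r where "r = min d1 (min d2 d3)"
  have "r > 0" "ball z0 r \<subseteq> D"
    using \<open>d1 > 0\<close> \<open>d2 > 0\<close> \<open>d3 > 0\<close> d3 unfolding r_def by auto
  then obtain p q where "dist p z0 < r" "dist q z0 < r" "A p \<i> = B q 1"
    using mixed_partials_meet_near[OF _ _ d\<phi> dA dB] by blast
  moreover have "dist (A p \<i>) (A z0 \<i>) < e" "dist (B q 1) (B z0 1) < e"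
    using d1[of p] d2[of q] \<open>dist p z0 < r\<close> \<open>dist q z0 < r\<close> unfolding r_def by auto
  ultimately show False
    unfolding e_def dist_real_def by (simp add: abs_if split: if_splits)
qed

section \<open>The Schwarz-Pick lemma for the disc and the strip\<close>

lemma one_minus_cnj_mult_neq_0:
  assumes "norm w < 1" "norm z < 1"
  shows "1 - cnj w * z \<noteq> 0"
proof -
  have "norm (cnj w * z) < 1 * 1"
    using assms by (intro norm_mult_less) auto
  then show ?thesis by auto
qed

lemma Moebius_function_has_field_derivative:
  assumes "norm w < 1" "norm z < 1"
  shows "(Moebius_function 0 w has_field_derivative of_real (1 - norm w ^ 2) / (1 - cnj w * z) ^ 2) (at z)"
proof -
  have nz: "1 - cnj w * z \<noteq> 0" using one_minus_cnj_mult_neq_0[OF assms] .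
  have "((\<lambda>z. (z - w) / (1 - cnj w * z)) has_field_derivative
      ((1 - cnj w * z) + (z - w) * cnj w) / (1 - cnj w * z) ^ 2) (at z)"
    using nz by (auto intro!: derivative_eq_intros simp: power2_eq_square)
  moreover have "(1 - cnj w * z) + (z - w) * cnj w = of_real (1 - norm w ^ 2)"
    using complex_norm_square[of w] by (simp add: algebra_simps)
  ultimately show ?thesis
    by (simp add: Moebius_function_simple[abs_def])
qed

lemma Moebius_conjugate_has_field_derivative:
  assumes hol: "\<Phi> holomorphic_on ball 0 1" and a: "norm a < 1" and b: "norm (\<Phi> a) < 1"
  shows "(Moebius_function 0 (\<Phi> a) \<circ> \<Phi> \<circ> Moebius_function 0 (- a) has_field_derivative
    deriv \<Phi> a * of_real ((1 - norm a ^ 2) / (1 - norm (\<Phi> a) ^ 2))) (at 0)"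
proof -
  define s where "s = 1 - norm a ^ 2"
  define t where "t = 1 - norm (\<Phi> a) ^ 2"
  have "t \<noteq> 0"
    using b unfolding t_def by (metis abs_norm_cancel abs_square_less_1 less_irrefl right_minus_eq)
  have cnj_t: "1 - cnj (\<Phi> a) * \<Phi> a = of_real t"
    using complex_norm_square[of "\<Phi> a"] by (simp add: t_def mult.commute)
  have dM: "(Moebius_function 0 (\<Phi> a) has_field_derivative 1 / of_real t) (at (\<Phi> a))"
    using Moebius_function_has_field_derivative[OF b b, unfolded t_def[symmetric] cnj_t] \<open>t \<noteq> 0\<close>
    by (simp add: power2_eq_square)
  have "(\<Phi> has_field_derivative deriv \<Phi> a) (at a)"
    using hol a by (intro holomorphic_derivI[of _ "ball 0 1"]) auto
  from DERIV_chain[OF dM this]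
  have "(Moebius_function 0 (\<Phi> a) \<circ> \<Phi> has_field_derivative 1 / of_real t * deriv \<Phi> a)
      (at (Moebius_function 0 (- a) 0))"
    by (simp add: Moebius_function_simple)
  moreover have "(Moebius_function 0 (- a) has_field_derivative of_real s) (at 0)"
    using Moebius_function_has_field_derivative[of "- a" 0, unfolded norm_minus_cancel s_def[symmetric]] a
    by simp
  ultimately have "(Moebius_function 0 (\<Phi> a) \<circ> \<Phi> \<circ> Moebius_function 0 (- a) has_field_derivative
      1 / of_real t * deriv \<Phi> a * of_real s) (at 0)"
    by (rule DERIV_chain)
  then show ?thesis
    by (simp add: s_def[symmetric] t_def[symmetric] field_simps)
qed

lemma Schwarz_Pick:
  assumes hol: "\<Phi> holomorphic_on ball 0 1" and into: "\<And>z. norm z < 1 \<Longrightarrow> norm (\<Phi> z) < 1"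
    and a: "norm a < 1"
  shows "norm (deriv \<Phi> a) * (1 - norm a ^ 2) \<le> 1 - norm (\<Phi> a) ^ 2"
proof -
  define \<Psi> where "\<Psi> = Moebius_function 0 (\<Phi> a) \<circ> \<Phi> \<circ> Moebius_function 0 (- a)"
  have b: "norm (\<Phi> a) < 1" using into a by simp
  have into_T: "norm (Moebius_function 0 (- a) z) < 1" if "norm z < 1" for z
    using Moebius_function_norm_lt_1 a that by simp
  have "\<Psi> holomorphic_on ball 0 1"
    unfolding \<Psi>_def
  proof (rule holomorphic_on_compose_gen)
    show "Moebius_function 0 (- a) holomorphic_on ball 0 1"
      using a by (simp add: Moebius_function_holomorphic)
    show "Moebius_function 0 (- a) ` ball 0 1 \<subseteq> ball 0 1"
      using into_T by auto
    show "(Moebius_function 0 (\<Phi> a) \<circ> \<Phi>) holomorphic_on ball 0 1"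
      using into by (intro holomorphic_on_compose_gen[OF hol Moebius_function_holomorphic[OF b]]) auto
  qed
  moreover have "\<Psi> 0 = 0"
    by (simp add: \<Psi>_def Moebius_function_simple)
  moreover have "norm (\<Psi> z) < 1" if "norm z < 1" for z
    unfolding \<Psi>_def using Moebius_function_norm_lt_1 b into into_T that by simp
  ultimately have "norm (deriv \<Psi> 0) \<le> 1"
    using Schwarz_Lemma(2)[of \<Psi> 0] by simp
  moreover have "deriv \<Psi> 0 = deriv \<Phi> a * of_real ((1 - norm a ^ 2) / (1 - norm (\<Phi> a) ^ 2))"
    unfolding \<Psi>_def by (rule DERIV_imp_deriv[OF Moebius_conjugate_has_field_derivative[OF hol a b]])
  moreover have "0 \<le> 1 - norm a ^ 2" "0 < 1 - norm (\<Phi> a) ^ 2"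
    using a b by (simp_all add: abs_square_less_1 less_imp_le)
  ultimately show ?thesis
    by (simp only: norm_mult norm_of_real abs_divide abs_of_nonneg abs_of_pos)
      (simp add: divide_le_eq)
qed

definition strip_to_disc :: "complex \<Rightarrow> complex" where
  "strip_to_disc w = (exp (\<i> * of_real (pi / 2) * w) - 1) / (exp (\<i> * of_real (pi / 2) * w) + 1)"

lemma Re_exp_strip_pos:
  assumes "\<bar>Re w\<bar> < 1"
  shows "Re (exp (\<i> * of_real (pi / 2) * w)) > 0"
proof -
  have "\<bar>pi / 2 * Re w\<bar> < pi / 2"
    using assms by (simp add: abs_mult)
  then have "cos (pi / 2 * Re w) > 0"
    by (intro cos_gt_zero_pi) (auto simp: abs_less_iff)
  then show ?thesis by (simp add: Re_exp)
qed

lemma norm_add_1_sq_minus_norm_diff_1_sq: "norm (x + 1) ^ 2 - norm (x - 1) ^ 2 = 4 * Re (x::complex)"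
  by (simp only: cmod_power2) (simp add: power2_eq_square algebra_simps)

lemma norm_strip_to_disc_lt_1:
  assumes "\<bar>Re w\<bar> < 1"
  shows "norm (strip_to_disc w) < 1"
proof -
  define E where "E = exp (\<i> * of_real (pi / 2) * w)"
  have "norm (E - 1) ^ 2 < norm (E + 1) ^ 2"
    using norm_add_1_sq_minus_norm_diff_1_sq[of E] Re_exp_strip_pos[OF assms] unfolding E_def by linarith
  then have "norm (E - 1) < norm (E + 1)"
    by (rule power_less_imp_less_base) simp
  then show ?thesis
    unfolding strip_to_disc_def E_def[symmetric] by (simp add: norm_divide divide_less_eq)
qed

lemma strip_to_disc_has_field_derivative:
  assumes "\<bar>Re w\<bar> < 1"
  shows "(strip_to_disc has_field_derivative
    \<i> * of_real pi * exp (\<i> * of_real (pi / 2) * w) / (exp (\<i> * of_real (pi / 2) * w) + 1) ^ 2) (at w)"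
proof -
  define c where "c = \<i> * of_real (pi / 2)"
  define E where "E w = exp (c * w)" for w
  have dE: "(E has_field_derivative c * E w) (at w)"
    unfolding E_def[abs_def] by (auto intro!: derivative_eq_intros)
  have "Re (E w + 1) > 0"
    using Re_exp_strip_pos[OF assms] unfolding E_def c_def by simp
  then have "E w + 1 \<noteq> 0"
    by (metis less_irrefl zero_complex.sel(1))
  then have "((\<lambda>w. (E w - 1) / (E w + 1)) has_field_derivative
      (c * E w * (E w + 1) - (E w - 1) * (c * E w)) / ((E w + 1) * (E w + 1))) (at w)"
    using DERIV_divide[OF DERIV_diff[OF dE DERIV_const] DERIV_add[OF dE DERIV_const]] by simp
  moreover have "c * E w * (E w + 1) - (E w - 1) * (c * E w) = \<i> * of_real pi * E w"
    unfolding c_def by (simp add: field_simps)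
  ultimately show ?thesis
    unfolding strip_to_disc_def[abs_def] E_def c_def by (simp add: power2_eq_square)
qed

text \<open>That is, the density of the hyperbolic metric of the strip is at least \<open>\<pi>/4\<close>.\<close>
lemma strip_to_disc_density:
  assumes "\<bar>Re w\<bar> < 1"
  shows "1 - norm (strip_to_disc w) ^ 2 \<le> 4 / pi * norm (deriv strip_to_disc w)"
proof -
  define E where "E = exp (\<i> * of_real (pi / 2) * w)"
  have "0 < Re (E + 1)"
    using Re_exp_strip_pos[OF assms] unfolding E_def by simp
  then have "norm (E + 1) > 0"
    using complex_Re_le_cmod[of "E + 1"] by linarith
  have "norm (strip_to_disc w) = norm (E - 1) / norm (E + 1)"
    unfolding strip_to_disc_def E_def[symmetric] by (rule norm_divide)
  then have "1 - norm (strip_to_disc w) ^ 2 = (norm (E + 1) ^ 2 - norm (E - 1) ^ 2) / norm (E + 1) ^ 2"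
    using \<open>norm (E + 1) > 0\<close> by (simp add: power_divide diff_divide_distrib)
  also have "\<dots> = 4 * Re E / norm (E + 1) ^ 2"
    by (simp only: norm_add_1_sq_minus_norm_diff_1_sq)
  also have "\<dots> \<le> 4 * norm E / norm (E + 1) ^ 2"
    by (intro divide_right_mono mult_left_mono complex_Re_le_cmod) auto
  also have "\<dots> = 4 / pi * norm (\<i> * of_real pi * E / (E + 1) ^ 2)"
    by (simp add: norm_mult norm_divide norm_power)
  also have "\<i> * of_real pi * E / (E + 1) ^ 2 = deriv strip_to_disc w"
    using DERIV_imp_deriv[OF strip_to_disc_has_field_derivative[OF assms]] by (simp add: E_def)
  finally show ?thesis .
qed

lemma Schwarz_Pick_strip:
  assumes hol: "F holomorphic_on ball 0 1" and strip: "\<And>z. norm z < 1 \<Longrightarrow> \<bar>Re (F z)\<bar> < 1"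
    and a: "norm a < 1"
  shows "norm (deriv F a) * (1 - norm a ^ 2) \<le> 4 / pi"
proof -
  have dF: "(F has_field_derivative deriv F a) (at a)"
    using hol a by (intro holomorphic_derivI[of _ "ball 0 1"]) auto
  have d\<psi>: "(strip_to_disc has_field_derivative deriv strip_to_disc w) (at w)" if "\<bar>Re w\<bar> < 1" for w
    using strip_to_disc_has_field_derivative[OF that] DERIV_imp_deriv by metis
  have "strip_to_disc holomorphic_on {w. \<bar>Re w\<bar> < 1}"
    unfolding holomorphic_on_def field_differentiable_def
    using d\<psi> has_field_derivative_at_within by blast
  then have "(strip_to_disc \<circ> F) holomorphic_on ball 0 1"
    using strip by (intro holomorphic_on_compose_gen[OF hol]) auto
  moreover have "deriv (strip_to_disc \<circ> F) a = deriv strip_to_disc (F a) * deriv F a"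
    by (rule DERIV_imp_deriv, rule DERIV_chain[OF d\<psi>[OF strip[OF a]] dF])
  ultimately have "norm (deriv strip_to_disc (F a)) * (norm (deriv F a) * (1 - norm a ^ 2))
      \<le> 1 - norm (strip_to_disc (F a)) ^ 2"
    using Schwarz_Pick[of "strip_to_disc \<circ> F" a] norm_strip_to_disc_lt_1 strip a
    by (simp add: norm_mult mult.assoc)
  also have "\<dots> \<le> 4 / pi * norm (deriv strip_to_disc (F a))"
    by (rule strip_to_disc_density[OF strip[OF a]])
  finally have "norm (deriv strip_to_disc (F a)) * (norm (deriv F a) * (1 - norm a ^ 2))
      \<le> norm (deriv strip_to_disc (F a)) * (4 / pi)"
    by (simp only: mult.commute)
  moreover have "0 < norm (deriv strip_to_disc (F a))"
  proof -
    have "0 < 1 - norm (strip_to_disc (F a)) ^ 2"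
      using norm_strip_to_disc_lt_1[OF strip[OF a]] by (simp add: abs_square_less_1)
    then have "0 < 4 / pi * norm (deriv strip_to_disc (F a))"
      using strip_to_disc_density[OF strip[OF a]] by linarith
    then show ?thesis
      by (auto simp: zero_less_mult_iff)
  qed
  ultimately show ?thesis
    by (rule mult_left_le_imp_le)
qed

section \<open>Harmonic quasiregular maps into the strip\<close>

lemma linear_complex_Re_Im:
  fixes L :: "complex \<Rightarrow> 'b::real_normed_vector"
  assumes "linear L"
  shows "L h = Re h *\<^sub>R L 1 + Im h *\<^sub>R L \<i>"
proof -
  have "h = Re h *\<^sub>R 1 + Im h *\<^sub>R \<i>" by (simp add: complex_eq_iff)
  then show ?thesis
    using assms by (metis linear_add linear_scale)
qed

lemma frechet_derivative_dx_dy: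
  assumes "f differentiable (at z)"
  shows "frechet_derivative f (at z) h = Re h *\<^sub>R dx f z + Im h *\<^sub>R dy f z"
  unfolding dx_def dy_def
  using linear_complex_Re_Im has_derivative_linear[OF frechet_derivative_works[THEN iffD1, OF assms]] .

lemma frechet_derivative_Wirtinger:
  assumes "f differentiable (at z)"
  shows "frechet_derivative f (at z) h = h * dz f z + cnj h * dzbar f z"
  unfolding frechet_derivative_dx_dy[OF assms] dz_def dzbar_def
  by (simp add: complex_eq_iff field_simps)

lemma norm_frechet_derivative_le_dilatation:
  assumes "f differentiable (at z)" and "norm (dz f z) > norm (dzbar f z)"
    and "(norm (dz f z) + norm (dzbar f z)) / (norm (dz f z) - norm (dzbar f z)) \<le> K"
  shows "norm (frechet_derivative f (at z) h) \<le> K * (norm (dz f z) - norm (dzbar f z)) * norm h"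
proof -
  have "norm (frechet_derivative f (at z) h) \<le> norm (h * dz f z) + norm (cnj h * dzbar f z)"
    unfolding frechet_derivative_Wirtinger[OF assms(1)] by (rule norm_triangle_ineq)
  also have "\<dots> = (norm (dz f z) + norm (dzbar f z)) * norm h"
    by (simp add: norm_mult algebra_simps)
  also have "\<dots> \<le> K * (norm (dz f z) - norm (dzbar f z)) * norm h"
    using assms(2,3) by (intro mult_right_mono) (simp_all add: divide_le_eq)
  finally show ?thesis .
qed

lemma harmonic_on_mixed_partials:
  assumes harm: "harmonic_on D f" and "z \<in> D"
  shows "dy (dx f) z = dx (dy f) z"
proof -
  have "open D" and fd: "\<And>w. w \<in> D \<Longrightarrow> f differentiable (at w)"
    and dd: "\<And>w. w \<in> D \<Longrightarrow> dx f differentiable (at w) \<and> dy f differentiable (at w)"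
    and "continuous_on D (dy (dx f))" "continuous_on D (dx (dy f))"
    using harm unfolding harmonic_on_def by auto
  then have cont: "continuous (at z) (dy (dx f))" "continuous (at z) (dx (dy f))"
    using \<open>z \<in> D\<close> continuous_on_eq_continuous_at by blast+
  have "c (dy (dx f) z) = c (dx (dy f) z)" if c: "bounded_linear c" for c :: "complex \<Rightarrow> real"
    unfolding dy_def[of "dx f"] dx_def[of "dy f"]
  proof (rule mixed_partials_eq[where \<phi> = "\<lambda>w. c (f w)"
        and \<Phi> = "\<lambda>w h. c (frechet_derivative f (at w) h)"
        and A = "\<lambda>w h. c (frechet_derivative (dx f) (at w) h)"
        and B = "\<lambda>w h. c (frechet_derivative (dy f) (at w) h)"])
    show "open D" "z \<in> D" by fact+
    show "((\<lambda>w. c (f w)) has_derivative (\<lambda>h. c (frechet_derivative f (at w) h))) (at w)"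
      if "w \<in> D" for w
      using fd[OF that] c by (auto intro: bounded_linear.has_derivative frechet_derivative_works[THEN iffD1])
    show "((\<lambda>w. c (frechet_derivative f (at w) 1)) has_derivative
        (\<lambda>h. c (frechet_derivative (dx f) (at w) h))) (at w)" if "w \<in> D" for w
      using dd[OF that] c unfolding dx_def[of f, symmetric]
      by (auto intro: bounded_linear.has_derivative frechet_derivative_works[THEN iffD1])
    show "((\<lambda>w. c (frechet_derivative f (at w) \<i>)) has_derivative
        (\<lambda>h. c (frechet_derivative (dy f) (at w) h))) (at w)" if "w \<in> D" for w
      using dd[OF that] c unfolding dy_def[of f, symmetric]
      by (auto intro: bounded_linear.has_derivative frechet_derivative_works[THEN iffD1])
    show "continuous (at z) (\<lambda>w. c (frechet_derivative (dx f) (at w) \<i>))"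
      "continuous (at z) (\<lambda>w. c (frechet_derivative (dy f) (at w) 1))"
      using cont c unfolding dx_def[of "dy f", symmetric] dy_def[of "dx f", symmetric]
      by (auto intro: continuous_at_compose[unfolded o_def] linear_continuous_at)
  qed
  from this[OF bounded_linear_Re] this[OF bounded_linear_Im] show ?thesis
    by (simp add: complex_eq_iff)
qed

lemma dz_plus_cnj_dzbar:
  "dz f w + cnj (dzbar f w) = of_real (Re (dx f w)) - \<i> * of_real (Re (dy f w))"
  unfolding dz_def dzbar_def by (simp add: complex_eq_iff field_simps)

text \<open>The function \<open>dz f + cnj (dzbar f)\<close> is \<open>2 \<partial>(Re f)/\<partial>z\<close>; it is holomorphic because
  \<open>Re f\<close> is harmonic.\<close>
lemma harmonic_on_holomorphic_dz_plus_cnj_dzbar: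
  assumes harm: "harmonic_on D f"
  shows "(\<lambda>w. dz f w + cnj (dzbar f w)) holomorphic_on D"
proof -
  have "open D" and dd: "\<And>w. w \<in> D \<Longrightarrow> dx f differentiable (at w) \<and> dy f differentiable (at w)"
    and lap: "\<And>w. w \<in> D \<Longrightarrow> dx (dx f) w + dy (dy f) w = 0"
    using harm unfolding harmonic_on_def by auto
  have "((\<lambda>w. of_real (Re (dx f w)) - \<i> * of_real (Re (dy f w))) has_field_derivative
      of_real (Re (dx (dx f) w)) - \<i> * of_real (Re (dx (dy f) w))) (at w)" if "w \<in> D" for w
  proof -
    have "((\<lambda>w. of_real (Re (dx f w)) - \<i> * of_real (Re (dy f w))) has_derivative
        (\<lambda>h. of_real (Re (frechet_derivative (dx f) (at w) h))
          - \<i> * of_real (Re (frechet_derivative (dy f) (at w) h)))) (at w)"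
      using dd[OF that] by (intro derivative_intros frechet_derivative_works[THEN iffD1]) auto
    moreover have "(\<lambda>h. of_real (Re (frechet_derivative (dx f) (at w) h))
          - \<i> * of_real (Re (frechet_derivative (dy f) (at w) h)))
        = (\<lambda>h. (of_real (Re (dx (dx f) w)) - \<i> * of_real (Re (dx (dy f) w))) * h)"
      using dd[OF that] lap[OF that, unfolded add_eq_0_iff] harmonic_on_mixed_partials[OF harm that]
      by (auto simp: fun_eq_iff frechet_derivative_dx_dy complex_eq_iff algebra_simps)
    ultimately show ?thesis
      by (simp add: has_field_derivative_def)
  qed
  then show ?thesis
    unfolding dz_plus_cnj_dzbar using \<open>open D\<close> by (auto simp: holomorphic_on_open)
qed

lemma harmonic_on_Re_holomorphic:
  assumes harm: "harmonic_on D f" and "convex D"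
  obtains F where "\<And>w. w \<in> D \<Longrightarrow> (F has_field_derivative dz f w + cnj (dzbar f w)) (at w)"
    and "\<And>w. w \<in> D \<Longrightarrow> Re (F w) = Re (f w)"
proof -
  have "open D" and fd: "\<And>w. w \<in> D \<Longrightarrow> f differentiable (at w)"
    using harm unfolding harmonic_on_def by auto
  obtain G where G_within: "\<And>w. w \<in> D \<Longrightarrow> (G has_field_derivative dz f w + cnj (dzbar f w)) (at w within D)"
    using holomorphic_convex_primitive'[OF \<open>convex D\<close> \<open>open D\<close> harmonic_on_holomorphic_dz_plus_cnj_dzbar[OF harm]]
    by blast
  have G: "(G has_field_derivative dz f w + cnj (dzbar f w)) (at w)" if "w \<in> D" for w
    using G_within[OF that] at_within_open[OF that \<open>open D\<close>] by simp
  have "((\<lambda>w. Re (G w) - Re (f w)) has_derivative (\<lambda>h. 0)) (at w within D)" if "w \<in> D" for w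
  proof -
    have "((\<lambda>w. Re (G w) - Re (f w)) has_derivative
        (\<lambda>h. Re ((dz f w + cnj (dzbar f w)) * h) - Re (frechet_derivative f (at w) h))) (at w)"
      using G[OF that] fd[OF that] unfolding has_field_derivative_def frechet_derivative_works
      by (intro has_derivative_diff has_derivative_Re)
    moreover have "(\<lambda>h. Re ((dz f w + cnj (dzbar f w)) * h) - Re (frechet_derivative f (at w) h)) = (\<lambda>h. 0)"
      by (simp add: fun_eq_iff dz_plus_cnj_dzbar frechet_derivative_dx_dy[OF fd[OF that]])
    ultimately have "((\<lambda>w. Re (G w) - Re (f w)) has_derivative (\<lambda>h. 0)) (at w)"
      by simp
    then show ?thesis
      by (rule has_derivative_at_withinI)
  qed
  then obtain c where c: "\<And>w. w \<in> D \<Longrightarrow> Re (G w) - Re (f w) = c"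
    using has_derivative_zero_constant[OF \<open>convex D\<close>, of "\<lambda>w. Re (G w) - Re (f w)"] by blast
  show ?thesis
  proof (rule that[of "\<lambda>w. G w - of_real c"])
    show "((\<lambda>w. G w - of_real c) has_field_derivative dz f w + cnj (dzbar f w)) (at w)" if "w \<in> D" for w
      using DERIV_diff[OF G[OF that] DERIV_const[of "of_real c"]] by simp
    show "Re (G w - of_real c) = Re (f w)" if "w \<in> D" for w
      using c[OF that] by simp
  qed
qed

lemma Schwarz_Pick_harmonic_strip:
  assumes harm: "harmonic_on (ball 0 1) f" and strip: "\<And>w. norm w < 1 \<Longrightarrow> \<bar>Re (f w)\<bar> < 1"
    and z: "norm z < 1"
  shows "(norm (dz f z) - norm (dzbar f z)) * (1 - norm z ^ 2) \<le> 4 / pi"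
proof -
  obtain F where dF: "\<And>w. norm w < 1 \<Longrightarrow> (F has_field_derivative dz f w + cnj (dzbar f w)) (at w)"
    and ReF: "\<And>w. norm w < 1 \<Longrightarrow> Re (F w) = Re (f w)"
    using harmonic_on_Re_holomorphic[OF harm convex_ball] by auto
  have "F holomorphic_on ball 0 1"
    using dF by (auto simp: holomorphic_on_open intro!: exI)
  then have "norm (deriv F z) * (1 - norm z ^ 2) \<le> 4 / pi"
    using ReF strip z by (intro Schwarz_Pick_strip) auto
  moreover have "deriv F z = dz f z + cnj (dzbar f z)"
    using dF[OF z] by (rule DERIV_imp_deriv)
  then have "norm (dz f z) - norm (dzbar f z) \<le> norm (deriv F z)"
    using norm_diff_ineq[of "dz f z" "cnj (dzbar f z)"] by simp
  moreover have "0 \<le> 1 - norm z ^ 2"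
    using z by (simp add: abs_square_less_1 less_imp_le)
  ultimately show ?thesis
    by (meson mult_right_mono order_trans)
qed

lemma HQR_frechet_derivative_bound:
  assumes f: "f \<in> HQR K unit_disc strip_S" and z: "norm z < 1"
  shows "norm (frechet_derivative f (at z) h) \<le> 4 / pi * K / (1 - norm z ^ 2) * norm h"
proof -
  have harm: "harmonic_on (ball 0 1) f" and img: "f ` ball 0 1 \<subseteq> strip_S"
    and qc: "norm (dz f z) > norm (dzbar f z)"
      "(norm (dz f z) + norm (dzbar f z)) / (norm (dz f z) - norm (dzbar f z)) \<le> K"
    using f z unfolding HQR_def unit_disc_def by auto
  have "(norm (dz f z) - norm (dzbar f z)) * (1 - norm z ^ 2) \<le> 4 / pi"
    using img by (intro Schwarz_Pick_harmonic_strip[OF harm _ z]) (auto simp: image_subset_iff strip_S_def abs_less_iff)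
  moreover have "0 < 1 - norm z ^ 2"
    using z by (simp add: abs_square_less_1)
  ultimately have dil: "norm (dz f z) - norm (dzbar f z) \<le> 4 / pi / (1 - norm z ^ 2)"
    by (simp add: pos_le_divide_eq mult_ac)
  have "0 \<le> K"
    using qc by (meson divide_nonneg_pos add_nonneg_nonneg norm_ge_zero diff_gt_0_iff_gt order_trans)
  have "norm (frechet_derivative f (at z) h) \<le> K * (norm (dz f z) - norm (dzbar f z)) * norm h"
    using harm z qc unfolding harmonic_on_def by (intro norm_frechet_derivative_le_dilatation) auto
  also have "\<dots> \<le> K * (4 / pi / (1 - norm z ^ 2)) * norm h"
    using dil \<open>0 \<le> K\<close> by (intro mult_right_mono mult_left_mono) auto
  finally show ?thesis
    by (simp add: mult.commute)
qed

section \<open>The growth bound\<close>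

lemma tanh_artanh_real:
  assumes "\<bar>x::real\<bar> < 1"
  shows "tanh (artanh x) = x"
proof -
  define q where "q = (1 + x) / (1 - x)"
  have "q > 0" using assms unfolding q_def by (auto simp: abs_less_iff)
  have "exp (- 2 * artanh x) = 1 / q"
    unfolding artanh_def q_def[symmetric] using \<open>q > 0\<close> by (simp add: exp_minus exp_ln inverse_eq_divide)
  then have "tanh (artanh x) = (1 - 1 / q) / (1 + 1 / q)"
    by (simp only: tanh_real_altdef)
  also have "\<dots> = ((q - 1) / q) / ((q + 1) / q)"
    using \<open>q > 0\<close> by (simp add: diff_divide_distrib add_divide_distrib)
  also have "\<dots> = (q - 1) / (q + 1)"
    using \<open>q > 0\<close> by simp
  also have "\<dots> = x"
    using assms unfolding q_def by (auto simp: field_simps abs_less_iff)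
  finally show ?thesis .
qed

text \<open>Along the ray \<open>s \<mapsto> tanh s \<cdot> u\<close> the speed equals the weight \<open>1 - \<bar>w\<bar>\<^sup>2\<close>, so the
  mean value theorem applies with a constant bound.\<close>
lemma norm_diff_le_along_tanh_ray:
  fixes f :: "complex \<Rightarrow> 'b::real_normed_vector"
  assumes df: "\<And>w. norm w < 1 \<Longrightarrow> (f has_derivative f' w) (at w)"
    and bound: "\<And>w h. norm w < 1 \<Longrightarrow> norm (f' w h) \<le> B / (1 - norm w ^ 2) * norm h"
    and "norm u = 1" "S \<ge> 0"
  shows "norm (f (of_real (tanh S) * u) - f 0) \<le> B * S"
proof -
  define \<gamma> where "\<gamma> s = of_real (tanh s) * u" for s
  have norm_\<gamma>: "norm (\<gamma> s) = \<bar>tanh s\<bar>" for s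
    using \<open>norm u = 1\<close> by (simp add: \<gamma>_def norm_mult)
  have \<gamma>_in: "norm (\<gamma> s) < 1" for s
    using tanh_real_bounds[of s] unfolding norm_\<gamma> by (simp add: abs_less_iff)
  have d: "((f \<circ> \<gamma>) has_derivative (\<lambda>t. t *\<^sub>R f' (\<gamma> s) (of_real (1 - tanh s ^ 2) * u))) (at s within {0..S})"
    for s
  proof -
    have "(tanh has_real_derivative 1 - tanh s ^ 2) (at s within {0..S})"
      using has_field_derivative_tanh[of "\<lambda>x. x" s 1 "{0..S}"] by simp
    then have "(\<gamma> has_vector_derivative of_real (1 - tanh s ^ 2) * u) (at s within {0..S})"
      unfolding \<gamma>_def[abs_def] by (intro has_vector_derivative_mult_left has_vector_derivative_of_real)
    from vector_derivative_diff_chain_within[OF this has_derivative_at_withinI[OF df[OF \<gamma>_in]]]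
    show ?thesis unfolding has_vector_derivative_def .
  qed
  have bound_\<gamma>: "onorm (\<lambda>t. t *\<^sub>R f' (\<gamma> s) (of_real (1 - tanh s ^ 2) * u)) \<le> B" for s
  proof -
    have "1 - tanh s ^ 2 > 0"
      using tanh_real_bounds[of s] by (simp add: abs_square_less_1 abs_less_iff)
    have "onorm (\<lambda>t. t *\<^sub>R f' (\<gamma> s) (of_real (1 - tanh s ^ 2) * u))
        = norm (f' (\<gamma> s) (of_real (1 - tanh s ^ 2) * u))"
      by (simp add: onorm_scaleR_left[OF bounded_linear_ident] onorm_id)
    also have "\<dots> \<le> B / (1 - norm (\<gamma> s) ^ 2) * norm (of_real (1 - tanh s ^ 2) * u :: complex)"
      by (rule bound[OF \<gamma>_in])
    also have "\<dots> = B"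
      using \<open>1 - tanh s ^ 2 > 0\<close> \<open>norm u = 1\<close> unfolding norm_\<gamma> norm_mult norm_of_real by simp
    finally show ?thesis .
  qed
  have "norm ((f \<circ> \<gamma>) S - (f \<circ> \<gamma>) 0) \<le> B * norm (S - 0)"
    using \<open>S \<ge> 0\<close> by (intro differentiable_bound[OF convex_real_interval(5) d bound_\<gamma>]) auto
  then show ?thesis
    using \<open>S \<ge> 0\<close> by (simp add: \<gamma>_def)
qed

lemma norm_diff_le_artanh:
  fixes f :: "complex \<Rightarrow> 'b::real_normed_vector"
  assumes df: "\<And>w. norm w < 1 \<Longrightarrow> (f has_derivative f' w) (at w)"
    and bound: "\<And>w h. norm w < 1 \<Longrightarrow> norm (f' w h) \<le> B / (1 - norm w ^ 2) * norm h"
    and z: "norm z < 1"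
  shows "norm (f z - f 0) \<le> B * artanh (norm z)"
proof (cases "z = 0")
  case False
  have "tanh (artanh (norm z)) = norm z"
    using z by (simp add: tanh_artanh_real)
  then have "artanh (norm z) \<ge> 0" and "of_real (tanh (artanh (norm z))) * sgn z = z"
    using tanh_real_nonneg_iff[of "artanh (norm z)"] False by (simp_all add: sgn_div_norm scaleR_conv_of_real)
  moreover have "norm (sgn z) = 1"
    using False by (simp add: norm_sgn)
  ultimately show ?thesis
    using norm_diff_le_along_tanh_ray[OF df bound] by metis
qed simp

lemma HQR_norm_le:
  assumes f: "f \<in> HQR K unit_disc strip_S" and "f 0 = 0" and "norm z < 1"
  shows "norm (f z) \<le> 4 / pi * K * artanh (norm z)"
proof -
  have "norm (f z - f 0) \<le> 4 / pi * K * artanh (norm z)"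
  proof (rule norm_diff_le_artanh[where f' = "\<lambda>w. frechet_derivative f (at w)"])
    show "(f has_derivative frechet_derivative f (at w)) (at w)" if "norm w < 1" for w
      using f that unfolding HQR_def harmonic_on_def unit_disc_def frechet_derivative_works by auto
    show "norm (frechet_derivative f (at w) h) \<le> 4 / pi * K / (1 - norm w ^ 2) * norm h"
      if "norm w < 1" for w h
      using HQR_frechet_derivative_bound[OF f that] .
  qed fact
  then show ?thesis
    using \<open>f 0 = 0\<close> by simp
qed

section \<open>Extremal maps\<close>

lemma has_derivative_bounded_linear_holomorphic_on:
  assumes L: "bounded_linear L" and H: "H holomorphic_on D" and "open D" "w \<in> D"
    and g: "\<And>v. v \<in> D \<Longrightarrow> g v = L (H v)"
  shows "(g has_derivative (\<lambda>h. L (deriv H w * h))) (at w)"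
proof -
  have "((\<lambda>v. L (H v)) has_derivative (\<lambda>h. L (deriv H w * h))) (at w)"
    using holomorphic_derivI[OF H \<open>open D\<close> \<open>w \<in> D\<close>] unfolding has_field_derivative_def
    by (rule bounded_linear.has_derivative[OF L])
  then show ?thesis
    by (rule has_derivative_transform_within_open[OF _ \<open>open D\<close> \<open>w \<in> D\<close>]) (simp add: g)
qed

lemma dx_dy_bounded_linear_holomorphic_on:
  assumes "bounded_linear L" "H holomorphic_on D" "open D" "w \<in> D"
    and "\<And>v. v \<in> D \<Longrightarrow> g v = L (H v)"
  shows "g differentiable (at w)" "dx g w = L (deriv H w)" "dy g w = L (\<i> * deriv H w)"
  using has_derivative_bounded_linear_holomorphic_on[OF assms]
  by (auto simp: differentiable_def dx_def dy_def mult.commute dest: frechet_derivative_at[symmetric])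

lemma bounded_linear_mult_i:
  assumes "bounded_linear L"
  shows "bounded_linear (\<lambda>x. L (\<i> * x))"
  using assms bounded_linear_mult_right by (rule bounded_linear_compose)

lemma continuous_on_dx_dy_bounded_linear_holomorphic_on:
  assumes L: "bounded_linear L" and H: "H holomorphic_on D" and "open D"
    and g: "\<And>v. v \<in> D \<Longrightarrow> g v = L (H v)"
  shows "continuous_on D (dx g)" "continuous_on D (dy g)"
proof -
  have cont: "continuous_on D (\<lambda>v. M (deriv H v))" if "bounded_linear M" for M
    using that holomorphic_on_imp_continuous_on[OF holomorphic_deriv[OF H \<open>open D\<close>]]
    by (rule bounded_linear.continuous_on)
  note d = dx_dy_bounded_linear_holomorphic_on[OF L H \<open>open D\<close> _ g]
  show "continuous_on D (dx g)"
    by (rule continuous_on_eq[OF cont[OF L]]) (simp add: d)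
  show "continuous_on D (dy g)"
    by (rule continuous_on_eq[OF cont[OF bounded_linear_mult_i[OF L]]]) (simp add: d)
qed

lemma harmonic_on_bounded_linear_holomorphic:
  assumes L: "bounded_linear L" and H: "H holomorphic_on D" and "open D"
  shows "harmonic_on D (\<lambda>v. L (H v))"
proof -
  define g where "g v = L (H v)" for v
  have H': "deriv H holomorphic_on D"
    using H \<open>open D\<close> by (rule holomorphic_deriv)
  note first = dx_dy_bounded_linear_holomorphic_on[OF L H \<open>open D\<close> _ g_def]
  have dxg: "dx g v = L (deriv H v)" and dyg: "dy g v = L (\<i> * deriv H v)" if "v \<in> D" for v
    using first[OF that] by simp_all
  note dx_second = dx_dy_bounded_linear_holomorphic_on[OF L H' \<open>open D\<close> _ dxg]
  note dy_second = dx_dy_bounded_linear_holomorphic_on[OF bounded_linear_mult_i[OF L] H' \<open>open D\<close> _ dyg]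
  note cont_dx = continuous_on_dx_dy_bounded_linear_holomorphic_on[OF L H' \<open>open D\<close> dxg]
  note cont_dy = continuous_on_dx_dy_bounded_linear_holomorphic_on[OF bounded_linear_mult_i[OF L] H' \<open>open D\<close> dyg]
  have "harmonic_on D g"
    unfolding harmonic_on_def
  proof (intro conjI ballI)
    show "g differentiable (at w)" "dx g differentiable (at w)" "dy g differentiable (at w)"
      if "w \<in> D" for w
      using first(1)[OF that] dx_second(1)[OF that] dy_second(1)[OF that] by (simp_all add: g_def[abs_def])
    show "dx (dx g) w + dy (dy g) w = 0" if "w \<in> D" for w
      using dx_second(2)[OF that] dy_second(3)[OF that] linear_neg[OF bounded_linear.linear[OF L]]
      by simp
  qed (use \<open>open D\<close> cont_dx cont_dy in auto)
  then show ?thesis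
    by (simp add: g_def[abs_def])
qed

definition stretch_Im :: "real \<Rightarrow> complex \<Rightarrow> complex" where
  "stretch_Im K w = Complex (Re w) (K * Im w)"

lemma bounded_linear_stretch_Im: "bounded_linear (stretch_Im K)"
  unfolding linear_conv_bounded_linear[symmetric]
  by (rule linearI) (simp_all add: stretch_Im_def complex_eq_iff algebra_simps)

lemma HQR_stretch_Im_holomorphic:
  assumes "K \<ge> 1" and H: "H holomorphic_on ball 0 1"
    and nz: "\<And>w. norm w < 1 \<Longrightarrow> deriv H w \<noteq> 0" and strip: "\<And>w. norm w < 1 \<Longrightarrow> \<bar>Re (H w)\<bar> < 1"
  shows "(\<lambda>w. stretch_Im K (H w)) \<in> HQR K unit_disc strip_S"
proof -
  define g where "g w = stretch_Im K (H w)" for w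
  have "norm (dz g w) > norm (dzbar g w) \<and>
      (norm (dz g w) + norm (dzbar g w)) / (norm (dz g w) - norm (dzbar g w)) \<le> K"
    if "norm w < 1" for w
  proof -
    have "w \<in> ball 0 1" using that by simp
    note d = dx_dy_bounded_linear_holomorphic_on[OF bounded_linear_stretch_Im H open_ball this g_def]
    have "dz g w = of_real ((K + 1) / 2) * deriv H w"
      "dzbar g w = of_real ((1 - K) / 2) * cnj (deriv H w)"
      unfolding dz_def dzbar_def d by (simp_all add: stretch_Im_def complex_eq_iff field_simps)
    then have n: "norm (dz g w) = (K + 1) / 2 * norm (deriv H w)"
      "norm (dzbar g w) = (K - 1) / 2 * norm (deriv H w)"
      using \<open>K \<ge> 1\<close> by (simp_all only: norm_mult norm_of_real complex_mod_cnj) simp_all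
    have "norm (deriv H w) > 0"
      using nz[OF that] by simp
    then show ?thesis
      unfolding n by (simp add: field_simps)
  qed
  moreover have "g ` ball 0 1 \<subseteq> strip_S"
    using strip by (auto simp: g_def strip_S_def stretch_Im_def abs_less_iff)
  moreover note harmonic_on_bounded_linear_holomorphic[OF bounded_linear_stretch_Im H open_ball]
    continuous_on_dx_dy_bounded_linear_holomorphic_on[OF bounded_linear_stretch_Im H open_ball g_def]
  ultimately show ?thesis
    by (auto simp: HQR_def unit_disc_def g_def[abs_def])
qed

text \<open>A conformal map of the unit disc onto the strip \<open>\<bar>Re w\<bar> < 1\<close> that sends the real
  diameter onto the imaginary axis, the direction that \<open>stretch_Im\<close> stretches.\<close>
definition disc_to_strip :: "complex \<Rightarrow> complex" where
  "disc_to_strip w = 2 * \<i> / of_real pi * Ln ((1 + w) / (1 - w))"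

lemma Re_add_div_diff_pos:
  assumes "norm (w::complex) < 1"
  shows "Re ((1 + w) / (1 - w)) > 0"
proof -
  have "Re w ^ 2 + Im w ^ 2 < 1"
    using assms by (metis abs_norm_cancel abs_square_less_1 cmod_power2)
  then have "(1 + Re w) * (1 - Re w) + Im w * (- Im w) > 0"
    by (simp add: power2_eq_square algebra_simps)
  moreover have "1 - w \<noteq> 0"
    using assms by auto
  ultimately show ?thesis
    by (simp add: Re_divide')
qed

lemma disc_to_strip_has_field_derivative:
  assumes "norm w < 1"
  shows "(disc_to_strip has_field_derivative
    2 * \<i> / of_real pi * (2 / ((1 - w) * (1 + w)))) (at w)"
proof -
  define Q where "Q v = (1 + v) / (1 - v)" for v :: complex
  have "1 - w \<noteq> 0" "1 + w \<noteq> 0"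
    using assms by (auto simp: add_eq_0_iff)
  have dQ: "(Q has_field_derivative 2 / (1 - w) ^ 2) (at w)"
    unfolding Q_def[abs_def] using \<open>1 - w \<noteq> 0\<close>
    by (auto intro!: derivative_eq_intros simp: power2_eq_square field_simps)
  have "Q w \<notin> \<real>\<^sub>\<le>\<^sub>0"
    using Re_add_div_diff_pos[OF assms] by (auto simp: Q_def complex_nonpos_Reals_iff)
  then have "((\<lambda>w. Ln (Q w)) has_field_derivative inverse (Q w) * (2 / (1 - w) ^ 2)) (at w)"
    using DERIV_chain2[OF has_field_derivative_Ln dQ] by blast
  moreover have "inverse (Q w) * (2 / (1 - w) ^ 2) = 2 / ((1 - w) * (1 + w))"
    using \<open>1 - w \<noteq> 0\<close> \<open>1 + w \<noteq> 0\<close> by (simp add: Q_def power2_eq_square divide_simps mult_ac)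
  ultimately show ?thesis
    unfolding disc_to_strip_def[abs_def] Q_def by (intro DERIV_cmult) simp
qed

lemma deriv_disc_to_strip_neq_0:
  assumes "norm w < 1"
  shows "deriv disc_to_strip w \<noteq> 0"
  using DERIV_imp_deriv[OF disc_to_strip_has_field_derivative[OF assms]] assms
  by (auto simp: add_eq_0_iff)

lemma Re_disc_to_strip:
  assumes "norm w < 1"
  shows "\<bar>Re (disc_to_strip w)\<bar> < 1"
proof -
  have "\<bar>Im (Ln ((1 + w) / (1 - w)))\<bar> < pi / 2"
    using Re_Ln_pos_lt_imp Re_add_div_diff_pos[OF assms] by blast
  then show ?thesis
    by (simp add: disc_to_strip_def abs_mult divide_less_eq)
qed

lemma disc_to_strip_of_real:
  assumes "\<bar>r\<bar> < 1"
  shows "disc_to_strip (of_real r) = \<i> * of_real (4 / pi * artanh r)"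
proof -
  have "(1 + r) / (1 - r) > 0"
    using assms by (auto simp: abs_less_iff)
  then have "Ln ((1 + of_real r) / (1 - of_real r)) = of_real (2 * artanh r)"
    using Ln_of_real[of "(1 + r) / (1 - r)"] by (simp add: artanh_def)
  then show ?thesis
    by (simp add: disc_to_strip_def)
qed

lemma HQR_stretch_Im_disc_to_strip:
  assumes "K \<ge> 1" and "norm \<rho> = 1"
  shows "(\<lambda>w. stretch_Im K (disc_to_strip (\<rho> * w))) \<in> HQR K unit_disc strip_S"
proof (rule HQR_stretch_Im_holomorphic[OF \<open>K \<ge> 1\<close>])
  have \<rho>w: "norm (\<rho> * w) < 1" if "norm w < 1" for w
    using that \<open>norm \<rho> = 1\<close> by (simp add: norm_mult)
  have dH: "((\<lambda>w. disc_to_strip (\<rho> * w)) has_field_derivative deriv disc_to_strip (\<rho> * w) * \<rho>) (at w)"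
    if "norm w < 1" for w
  proof -
    note d = disc_to_strip_has_field_derivative[OF \<rho>w[OF that]]
    have "(disc_to_strip has_field_derivative deriv disc_to_strip (\<rho> * w)) (at (\<rho> * w))"
      using d DERIV_imp_deriv[OF d] by simp
    moreover have "((\<lambda>v. \<rho> * v) has_field_derivative \<rho>) (at w)"
      by (auto intro!: derivative_eq_intros)
    ultimately show ?thesis
      by (rule DERIV_chain2)
  qed
  show "(\<lambda>w. disc_to_strip (\<rho> * w)) holomorphic_on ball 0 1"
    using dH by (auto simp: holomorphic_on_open intro!: exI)
  show "deriv (\<lambda>w. disc_to_strip (\<rho> * w)) w \<noteq> 0" if "norm w < 1" for w
    using DERIV_imp_deriv[OF dH[OF that]] deriv_disc_to_strip_neq_0[OF \<rho>w[OF that]] \<open>norm \<rho> = 1\<close> by auto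
  show "\<bar>Re (disc_to_strip (\<rho> * w))\<bar> < 1" if "norm w < 1" for w
    using Re_disc_to_strip[OF \<rho>w[OF that]] .
qed

lemma HQR_norm_bound_attained:
  assumes "K \<ge> 1" and z: "norm z < 1"
  shows "\<exists>g\<in>HQR K unit_disc strip_S. g 0 = 0 \<and> norm (g z) = 4 / pi * K * artanh (norm z)"
proof -
  obtain \<rho> where "norm \<rho> = 1" and \<rho>z: "\<rho> * z = of_real (norm z)"
  proof (cases "z = 0")
    case False
    show ?thesis
      by (rule that[of "cnj z / of_real (norm z)"])
        (use False in \<open>auto simp: norm_divide complex_norm_square[symmetric] power2_eq_square mult.commute\<close>)
  qed (auto intro: that[of 1])
  define g where "g w = stretch_Im K (disc_to_strip (\<rho> * w))" for w
  have "g 0 = 0"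
    using disc_to_strip_of_real[of 0] by (simp add: g_def stretch_Im_def Complex_eq_0)
  have "g z = \<i> * of_real (4 / pi * K * artanh (norm z))"
    using disc_to_strip_of_real[of "norm z"] z by (simp add: g_def \<rho>z stretch_Im_def complex_eq_iff)
  then have "norm (g z) = \<bar>4 / pi * K * artanh (norm z)\<bar>"
    by (simp only: norm_mult norm_ii norm_of_real mult_1)
  also have "\<dots> = 4 / pi * K * artanh (norm z)"
  proof (rule abs_of_nonneg)
    have "0 \<le> artanh (norm z)"
      using z by (simp add: artanh_def)
    then show "0 \<le> 4 / pi * K * artanh (norm z)"
      using \<open>K \<ge> 1\<close> by simp
  qed
  finally have "norm (g z) = 4 / pi * K * artanh (norm z)" .
  moreover have "g \<in> HQR K unit_disc strip_S"
    unfolding g_def[abs_def] using \<open>K \<ge> 1\<close> \<open>norm \<rho> = 1\<close> by (rule HQR_stretch_Im_disc_to_strip)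
  ultimately show ?thesis
    using \<open>g 0 = 0\<close> by blast
qed

theorem theorem7:
  fixes K :: real and f :: "complex \<Rightarrow> complex"
  assumes "K \<ge> 1"
    and "f \<in> HQR K unit_disc strip_S"
    and "f 0 = 0"
  shows "(\<forall>z\<in>unit_disc. norm (f z) \<le> 4 / pi * K * artanh (norm z))
    \<and> (\<forall>z\<in>unit_disc. \<exists>g\<in>HQR K unit_disc strip_S.
          g 0 = 0 \<and> norm (g z) = 4 / pi * K * artanh (norm z))"
  using HQR_norm_le[OF assms(2,3)] HQR_norm_bound_attained[OF assms(1)]
  by (simp add: unit_disc_def)

end
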